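(* Let $C=[x,x+1)\times[y,y+1)$ with $x,y\in\mathbb{Z}$ be a cell of the integer grid, let $\mathcal{D}(C)$ be a finite set of disks of radius $\sqrt{2}$ whose centers lie in $C$, let $\ell_{\mathrm{top}}(C)$ be the line containing the top edge of $C$, and let $U_{\mathrm{top}}(C)$ be the part of the union of the disks in $\mathcal{D}(C)$ lying above $\ell_{\mathrm{top}}(C)$. Then each disk $D_i\in\mathcal{D}(C)$ contributes at most one arc to the boundary of $U_{\mathrm{top}}(C)$. Moreover, for disks $D_i,D_j\in\mathcal{D}(C)$ with centers $p_i,p_j$ that both contribute arcs, the arc contributed by $D_i$ lies to the left of the arc contributed by $D_j$ if and only if $p_i$ lies to the left of $p_j$. *)

theory Defs
  imports "HOL-Analysis.Analysis"
begin

definition cell :: "int \<Rightarrow> int \<Rightarrow> (real \<times> real) set" where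
  "cell x y = {real_of_int x ..< real_of_int x + 1} \<times> {real_of_int y ..< real_of_int y + 1}"

definition Utop :: "int \<Rightarrow> (real \<times> real) set \<Rightarrow> (real \<times> real) set" where
  "Utop y P = (\<Union>p\<in>P. cball p (sqrt 2)) \<inter> {q. snd q \<ge> real_of_int y + 1}"

definition arc_of :: "int \<Rightarrow> (real \<times> real) set \<Rightarrow> real \<times> real \<Rightarrow> (real \<times> real) set" where
  "arc_of y P p = frontier (Utop y P) \<inter> sphere p (sqrt 2) \<inter> {q. snd q > real_of_int y + 1}"

definition contributes :: "int \<Rightarrow> (real \<times> real) set \<Rightarrow> real \<times> real \<Rightarrow> bool" where
  "contributes y P p \<longleftrightarrow> (\<exists>a b. a \<in> arc_of y P p \<and> b \<in> arc_of y P p \<and> a \<noteq> b)"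

end

(*
  All centres lie below the line, so a point above it is on the frontier of the union exactly
  when it is on one of the circles and outside every open disk; the arc of a disk is thus the
  part of its upper semicircle outside the other disks. Parametrised by abscissa this part is an
  interval: if a point between two of its points lay inside the disk about q, the circle about q
  would meet the semicircle twice above the line, whereas the two common points of equal circles
  are symmetric about the midpoint of their centres, which lies below the line. For the order, an
  elementary computation shows that the arc about the left centre lies weakly left of the arc
  about the right one; an arc with two points is not a single vertical line, so the order of
  the arcs determines the order of the centres strictly.
*)
theory Submission
  imports Defs
begin

definition sqdist :: "real \<times> real \<Rightarrow> real \<times> real \<Rightarrow> real" where
  "sqdist u v = (fst u - fst v)^2 + (snd u - snd v)^2"

lemma dist_eq_sqrt_sqdist: "dist u v = sqrt (sqdist u v)"
  by (cases u, cases v) (simp add: sqdist_def dist_Pair_Pair dist_real_def)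

lemma sqdist_commute: "sqdist u v = sqdist v u"
  by (simp add: sqdist_def power2_commute)

text \<open>Coordinates centred at \<open>q\<close>, with \<open>p = (-d1, -d2)\<close>, \<open>a = (\<sigma>, \<gamma>)\<close>, \<open>b = (t, \<beta>)\<close>.\<close>
lemma upper_arcs_ordered_normalised:
  fixes d1 d2 \<sigma> \<gamma> t \<beta> R :: real
  assumes d1: "0 \<le> d1" and d2: "0 \<le> d2" and d_nz: "d1 \<noteq> 0 \<or> d2 \<noteq> 0" and \<gamma>: "0 < \<gamma>"
    and a_on: "(\<sigma> + d1)^2 + (\<gamma> + d2)^2 = R" and a_out: "R \<le> \<sigma>^2 + \<gamma>^2"
    and b_on: "t^2 + \<beta>^2 = R" and \<beta>: "0 < \<beta>" and b_out: "R \<le> (t + d1)^2 + (\<beta> + d2)^2"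
  shows "\<sigma> \<le> t"
proof (rule ccontr)
  assume "\<not> \<sigma> \<le> t"
  hence t_lt: "t < \<sigma>" by simp
  have "t^2 \<le> R" using b_on by (smt (verit) zero_le_power2)
  hence "- t \<le> sqrt R" using real_le_rsqrt[of "-t" R] by simp
  have "(\<sigma> + d1)^2 < R" using a_on \<gamma> d2 by (smt (verit) zero_less_power2)
  hence "\<sigma> + d1 < sqrt R" using real_less_rsqrt by blast
  have "\<bar>\<sigma>\<bar> < sqrt R" using \<open>- t \<le> sqrt R\<close> t_lt \<open>\<sigma> + d1 < sqrt R\<close> d1 by linarith
  hence \<sigma>_sq: "\<sigma>^2 < R"
    by (metis real_sqrt_abs real_sqrt_less_iff)
  txt \<open>The point \<open>(\<sigma>, c)\<close> of the circle about the origin lies below \<open>a\<close> and hence in the disk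
    about \<open>p\<close>; this forces \<open>\<sigma> < 0\<close>. Moving left from it along that circle to \<open>b\<close>
    decreases \<open>x d1 + y d2\<close>, so \<open>b\<close> would lie inside the disk about \<open>p\<close> as well.\<close>
  define c where "c = sqrt (R - \<sigma>^2)"
  have c_pos: "0 < c" and c_sq: "c^2 = R - \<sigma>^2" using \<sigma>_sq by (simp_all add: c_def)
  have "c \<le> \<gamma>" using c_sq a_out \<gamma> power2_le_imp_le[of c \<gamma>] by linarith
  hence "(c + d2)^2 \<le> (\<gamma> + d2)^2" using c_pos d2 by (intro power_mono) auto
  hence in_disk: "2*\<sigma>*d1 + 2*c*d2 + d1^2 + d2^2 \<le> 0"
    using a_on c_sq by (simp add: power2_eq_square algebra_simps)
  have d_sq_pos: "0 < d1^2 + d2^2" using d_nz by (simp add: sum_power2_gt_zero_iff)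
  have "\<sigma> < 0"
  proof (rule ccontr)
    assume "\<not> \<sigma> < 0"
    hence "0 \<le> \<sigma>*d1" "0 \<le> c*d2" using d1 d2 c_pos by auto
    thus False using in_disk d_sq_pos by linarith
  qed
  hence "0 < (t - \<sigma>) * (t + \<sigma>)" using t_lt by (intro mult_neg_neg) auto
  hence "\<sigma>^2 < t^2" by (simp add: power2_eq_square algebra_simps)
  hence "\<beta>^2 < c^2" using b_on c_sq by linarith
  hence "\<beta> < c" using c_pos power_less_imp_less_base[of \<beta> 2 c] by linarith
  have "t*d1 + \<beta>*d2 < \<sigma>*d1 + c*d2"
  proof (cases "d1 = 0")
    case True
    then show ?thesis using d_nz d2 \<open>\<beta> < c\<close> by simp
  next
    case False
    then have "t*d1 < \<sigma>*d1" using d1 t_lt by simp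
    moreover have "\<beta>*d2 \<le> c*d2" using \<open>\<beta> < c\<close> d2 by (simp add: mult_right_mono)
    ultimately show ?thesis by linarith
  qed
  moreover have "0 \<le> 2*t*d1 + 2*\<beta>*d2 + d1^2 + d2^2"
    using b_out b_on by (simp add: power2_eq_square algebra_simps)
  ultimately show False using in_disk by linarith
qed

lemma upper_arcs_ordered_lower_left:
  assumes "p \<noteq> q" and "fst p \<le> fst q" and "snd p \<le> snd q"
    and "sqdist a p = R" and "R \<le> sqdist a q" and "snd q < snd a"
    and "sqdist b q = R" and "R \<le> sqdist b p" and "snd q < snd b"
  shows "fst a \<le> fst b"
proof -
  have centres_differ: "fst q - fst p \<noteq> 0 \<or> snd q - snd p \<noteq> 0"
    using assms(1) by (auto simp: prod_eq_iff)
  have "fst a - fst q \<le> fst b - fst q"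
  proof (rule upper_arcs_ordered_normalised[where \<gamma> = "snd a - snd q" and \<beta> = "snd b - snd q"])
    show "(fst a - fst q + (fst q - fst p))^2 + (snd a - snd q + (snd q - snd p))^2 = R"
      using assms(4) by (simp add: sqdist_def)
    show "R \<le> (fst b - fst q + (fst q - fst p))^2 + (snd b - snd q + (snd q - snd p))^2"
      using assms(8) by (simp add: sqdist_def)
  qed (use assms centres_differ in \<open>auto simp: sqdist_def\<close>)
  thus ?thesis by simp
qed

lemma upper_arcs_ordered:
  assumes "p \<noteq> q" and "fst p \<le> fst q" and "snd p < Y" and "snd q < Y"
    and "sqdist a p = R" and "R \<le> sqdist a q" and "Y < snd a"
    and "sqdist b q = R" and "R \<le> sqdist b p" and "Y < snd b"
  shows "fst a \<le> fst b"
proof (cases "snd p \<le> snd q")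
  case True
  then show ?thesis using upper_arcs_ordered_lower_left[of p q a R b] assms by auto
next
  case False
  txt \<open>Reflecting in the vertical axis exchanges the roles of \<open>p\<close> and \<open>q\<close>.\<close>
  have "fst (- fst b, snd b) \<le> fst (- fst a, snd a)"
    by (rule upper_arcs_ordered_lower_left[of "(- fst q, snd q)" "(- fst p, snd p)" _ R])
      (use assms False in \<open>auto simp: prod_eq_iff sqdist_def power2_commute\<close>)
  then show ?thesis by simp
qed

lemma perpendicular_same_length_opposite:
  fixes a1 a2 b1 b2 e1 e2 :: real
  assumes a_perp: "a1 * e1 + a2 * e2 = 0" and b_perp: "b1 * e1 + b2 * e2 = 0"
    and same_length: "a1^2 + a2^2 = b1^2 + b2^2"
    and e_nz: "e1 \<noteq> 0 \<or> e2 \<noteq> 0" and a_ne_b: "a1 \<noteq> b1 \<or> a2 \<noteq> b2"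
  shows "a1 + b1 = 0 \<and> a2 + b2 = 0"
proof -
  have "e1 * (a1 * b2 - a2 * b1) = b2 * (a1 * e1 + a2 * e2) - a2 * (b1 * e1 + b2 * e2)"
    and "e2 * (a1 * b2 - a2 * b1) = a1 * (b1 * e1 + b2 * e2) - b1 * (a1 * e1 + a2 * e2)"
    by (simp_all add: algebra_simps)
  hence parallel: "a1 * b2 - a2 * b1 = 0" using a_perp b_perp e_nz by auto
  define s1 s2 t1 t2 where "s1 = a1 + b1" "s2 = a2 + b2" "t1 = a1 - b1" "t2 = a2 - b2"
  have "(s1^2 + s2^2) * (t1^2 + t2^2) = (s1 * t1 + s2 * t2)^2 + (s1 * t2 - s2 * t1)^2"
    by (simp add: power2_eq_square algebra_simps)
  also have "s1 * t1 + s2 * t2 = 0"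
    using same_length by (simp add: s1_s2_t1_t2_def power2_eq_square algebra_simps)
  also have "s1 * t2 - s2 * t1 = 0"
    using parallel by (simp add: s1_s2_t1_t2_def algebra_simps)
  finally have "(s1^2 + s2^2) * (t1^2 + t2^2) = 0" by simp
  moreover have "t1^2 + t2^2 \<noteq> 0"
    using a_ne_b by (simp add: s1_s2_t1_t2_def sum_power2_eq_zero_iff)
  ultimately have "s1^2 + s2^2 = 0" by auto
  thus ?thesis by (simp add: s1_s2_t1_t2_def sum_power2_eq_zero_iff)
qed

lemma equal_circles_common_points_sum:
  assumes "sqdist z p = R" and "sqdist z q = R" and "sqdist w p = R" and "sqdist w q = R"
    and "p \<noteq> q" and "z \<noteq> w"
  shows "z + w = p + q"
proof -
  let ?a1 = "2 * fst z - fst p - fst q" and ?a2 = "2 * snd z - snd p - snd q"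
  let ?b1 = "2 * fst w - fst p - fst q" and ?b2 = "2 * snd w - snd p - snd q"
  let ?e1 = "fst q - fst p" and ?e2 = "snd q - snd p"
  have "?a1 * ?e1 + ?a2 * ?e2 = 0" "?b1 * ?e1 + ?b2 * ?e2 = 0"
    "?a1^2 + ?a2^2 = ?b1^2 + ?b2^2"
    using assms(1-4) by (simp_all add: sqdist_def power2_eq_square algebra_simps)
  moreover have "?e1 \<noteq> 0 \<or> ?e2 \<noteq> 0" "?a1 \<noteq> ?b1 \<or> ?a2 \<noteq> ?b2"
    using assms(5,6) by (auto simp: prod_eq_iff)
  ultimately have "?a1 + ?b1 = 0 \<and> ?a2 + ?b2 = 0" by (rule perpendicular_same_length_opposite)
  hence "fst z + fst w = fst p + fst q" "snd z + snd w = snd p + snd q" by linarith+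
  thus ?thesis by (simp add: prod_eq_iff)
qed

definition upper_arc :: "real \<Rightarrow> real \<Rightarrow> (real \<times> real) set \<Rightarrow> real \<times> real \<Rightarrow> (real \<times> real) set" where
  "upper_arc R Y P p = {z. sqdist z p = R \<and> Y < snd z \<and> (\<forall>q\<in>P. R \<le> sqdist z q)}"

definition upper_semicircle :: "real \<Rightarrow> real \<times> real \<Rightarrow> real \<Rightarrow> real \<times> real" where
  "upper_semicircle R p w = (w, snd p + sqrt (R - (w - fst p)^2))"

lemma fst_upper_semicircle [simp]: "fst (upper_semicircle R p w) = w"
  by (simp add: upper_semicircle_def)

lemma continuous_on_upper_semicircle: "continuous_on S (upper_semicircle R p)"
  unfolding upper_semicircle_def by (intro continuous_intros)

lemma upper_semicircle_fst_eq:
  assumes "sqdist z p = R" and "snd p \<le> snd z"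
  shows "upper_semicircle R p (fst z) = z"
proof -
  have "(snd z - snd p)^2 = R - (fst z - fst p)^2" using assms(1) by (simp add: sqdist_def)
  hence "sqrt (R - (fst z - fst p)^2) = snd z - snd p"
    using assms(2) by (metis real_sqrt_abs abs_of_nonneg diff_ge_0_iff_ge)
  thus ?thesis by (simp add: upper_semicircle_def prod_eq_iff)
qed

lemma upper_semicircle_above_between:
  assumes "w1 \<le> w" and "w \<le> w3" and "snd p < Y"
    and "Y < snd (upper_semicircle R p w1)" and "Y < snd (upper_semicircle R p w3)"
  shows "Y < snd (upper_semicircle R p w) \<and> sqdist (upper_semicircle R p w) p = R"
proof -
  have "(w - fst p)^2 \<le> (w1 - fst p)^2 \<or> (w - fst p)^2 \<le> (w3 - fst p)^2"
    using assms(1,2) by (simp add: abs_le_square_iff[symmetric]) linarith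
  hence "sqrt (R - (w1 - fst p)^2) \<le> sqrt (R - (w - fst p)^2) \<or>
      sqrt (R - (w3 - fst p)^2) \<le> sqrt (R - (w - fst p)^2)"
    by (auto intro: real_sqrt_le_mono)
  moreover have "Y - snd p < sqrt (R - (w1 - fst p)^2)" "Y - snd p < sqrt (R - (w3 - fst p)^2)"
    using assms(4,5) unfolding upper_semicircle_def snd_conv by linarith+
  ultimately have height: "Y - snd p < sqrt (R - (w - fst p)^2)" by linarith
  hence "0 < R - (w - fst p)^2" using assms(3) by (smt (verit) real_sqrt_le_0_iff)
  with height show ?thesis by (simp add: upper_semicircle_def sqdist_def)
qed

lemma upper_semicircle_outside_between:
  assumes "w1 \<le> w" and "w \<le> w3" and "snd p < Y" and "snd q < Y"
    and "Y < snd (upper_semicircle R p w1)" and "Y < snd (upper_semicircle R p w3)"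
    and "R \<le> sqdist (upper_semicircle R p w1) q" and "R \<le> sqdist (upper_semicircle R p w3) q"
  shows "R \<le> sqdist (upper_semicircle R p w) q"
proof (rule ccontr)
  txt \<open>Otherwise the circle about \<open>q\<close> crosses the arc twice above the line; but two common points
    of equal circles are symmetric about the midpoint of \<open>p\<close> and \<open>q\<close>, which lies below it.\<close>
  let ?F = "upper_semicircle R p"
  let ?g = "\<lambda>t. sqdist (?F t) q"
  assume "\<not> R \<le> ?g w"
  hence inside: "?g w < R" by simp
  have on_arc: "Y < snd (?F t) \<and> sqdist (?F t) p = R" if "w1 \<le> t" "t \<le> w3" for t
    using upper_semicircle_above_between[OF that assms(3,5,6)] .
  have "continuous_on X ?g" for X
    unfolding sqdist_def using continuous_on_upper_semicircle
    by (intro continuous_intros) (auto intro: continuous_on_subset)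
  then obtain ta tb where ta: "w1 \<le> ta" "ta \<le> w" "?g ta = R" and tb: "w \<le> tb" "tb \<le> w3" "?g tb = R"
    using IVT2'[of ?g w R w1] IVT'[of ?g w R w3] assms(1,2,7,8) inside by (metis less_eq_real_def)
  have "ta \<noteq> w" "tb \<noteq> w" using ta(3) tb(3) inside by auto
  hence "ta < tb" using ta tb by linarith
  hence "?F ta \<noteq> ?F tb" by (metis fst_upper_semicircle less_irrefl)
  moreover have "p \<noteq> q" using inside on_arc assms(1,2) by auto
  moreover have above: "Y < snd (?F ta)" "Y < snd (?F tb)"
    and "sqdist (?F ta) p = R" "sqdist (?F tb) p = R"
    using on_arc ta tb assms(1,2) by auto
  ultimately have "?F ta + ?F tb = p + q"
    using equal_circles_common_points_sum ta(3) tb(3) by blast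
  hence "snd (?F ta) + snd (?F tb) = snd p + snd q" by (metis snd_add)
  with above show False using assms(3,4) by linarith
qed

lemma connected_upper_arc:
  assumes "p \<in> P" and below: "\<forall>q\<in>P. snd q < Y"
  shows "connected (upper_arc R Y P p)"
proof -
  let ?F = "upper_semicircle R p"
  define S where "S = {w. ?F w \<in> upper_arc R Y P p}"
  have "snd p < Y" using assms by blast
  have "upper_arc R Y P p = ?F ` S"
  proof (intro equalityI subsetI)
    fix z assume z: "z \<in> upper_arc R Y P p"
    hence "?F (fst z) = z" using \<open>snd p < Y\<close> by (intro upper_semicircle_fst_eq) (auto simp: upper_arc_def)
    with z show "z \<in> ?F ` S" unfolding S_def by (metis image_eqI mem_Collect_eq)
  qed (auto simp: S_def)
  moreover have "connected S"
    unfolding connected_iff_interval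
  proof (intro ballI allI impI)
    fix w1 w3 w assume "w1 \<in> S" "w3 \<in> S" "w1 \<le> w" "w \<le> w3"
    with \<open>snd p < Y\<close> below show "w \<in> S"
      using upper_semicircle_above_between[of w1 w w3 p Y R]
        upper_semicircle_outside_between[of w1 w w3 p Y _ R]
      by (auto simp: S_def upper_arc_def)
  qed
  ultimately show ?thesis
    using connected_continuous_image continuous_on_upper_semicircle by metis
qed

lemma upper_arc_fst_le:
  assumes "p \<in> P" and "q \<in> P" and "p \<noteq> q" and "fst p \<le> fst q" and below: "\<forall>c\<in>P. snd c < Y"
    and "a \<in> upper_arc R Y P p" and "b \<in> upper_arc R Y P q"
  shows "fst a \<le> fst b"
proof (rule upper_arcs_ordered[of p q Y a R b])
  show "snd p < Y" "snd q < Y" using assms(1,2) below by auto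
  show "sqdist a p = R" "R \<le> sqdist a q" "Y < snd a"
    using assms(2,6) by (auto simp: upper_arc_def)
  show "sqdist b q = R" "R \<le> sqdist b p" "Y < snd b"
    using assms(1,7) by (auto simp: upper_arc_def)
qed (use assms(3,4) in auto)

lemma upper_arc_fst_inj:
  assumes "snd p < Y" and "a \<in> upper_arc R Y P p" and "a' \<in> upper_arc R Y P p"
    and "fst a = fst a'"
  shows "a = a'"
proof -
  have "upper_semicircle R p (fst z) = z" if "z \<in> upper_arc R Y P p" for z
    using that assms(1) by (intro upper_semicircle_fst_eq) (auto simp: upper_arc_def)
  then show ?thesis using assms(2-4) by metis
qed

lemma upper_arc_left_iff:
  assumes pP: "p \<in> P" and qP: "q \<in> P" and pq: "p \<noteq> q" and below: "\<forall>c\<in>P. snd c < Y"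
    and a: "a1 \<in> upper_arc R Y P p" "a2 \<in> upper_arc R Y P p" "a1 \<noteq> a2"
    and b: "b \<in> upper_arc R Y P q"
  shows "(\<forall>a\<in>upper_arc R Y P p. \<forall>b\<in>upper_arc R Y P q. fst a \<le> fst b) \<longleftrightarrow> fst p < fst q"
proof
  assume left: "\<forall>a\<in>upper_arc R Y P p. \<forall>b\<in>upper_arc R Y P q. fst a \<le> fst b"
  show "fst p < fst q"
  proof (rule ccontr)
    assume "\<not> fst p < fst q"
    hence "fst b \<le> fst a1" "fst b \<le> fst a2"
      using upper_arc_fst_le[OF qP pP] assms by auto
    moreover have "fst a1 \<le> fst b" "fst a2 \<le> fst b" using left a b by blast+
    ultimately have "fst a1 = fst a2" by linarith
    hence "a1 = a2" using upper_arc_fst_inj a pP below by blast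
    with a show False by blast
  qed
next
  assume "fst p < fst q"
  then show "\<forall>a\<in>upper_arc R Y P p. \<forall>b\<in>upper_arc R Y P q. fst a \<le> fst b"
    using upper_arc_fst_le[OF pP qP pq _ below] by auto
qed

lemma raised_point_notin_Utop:
  assumes below: "\<forall>q\<in>P. snd q < real_of_int y + 1" and out: "\<forall>q\<in>P. 2 \<le> sqdist z q"
    and "real_of_int y + 1 < snd z" and "0 < e"
  shows "(fst z, snd z + e) \<notin> Utop y P"
proof
  assume "(fst z, snd z + e) \<in> Utop y P"
  then obtain q where q: "q \<in> P" "sqdist (fst z, snd z + e) q \<le> 2"
    by (auto simp: Utop_def dist_eq_sqrt_sqdist sqdist_commute)
  have "sqdist (fst z, snd z + e) q = sqdist z q + 2 * e * (snd z - snd q) + e^2"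
    by (simp add: sqdist_def power2_eq_square algebra_simps)
  moreover have "snd q < snd z" using below q(1) assms(3) by fastforce
  hence "0 < e * (snd z - snd q)" using assms(4) by simp
  moreover have "2 \<le> sqdist z q" "0 < e^2" using out q(1) assms(4) by auto
  ultimately show False using q(2) by linarith
qed

lemma arc_of_eq_upper_arc:
  assumes pP: "p \<in> P" and below: "\<forall>q\<in>P. snd q < real_of_int y + 1"
  shows "arc_of y P p = upper_arc 2 (real_of_int y + 1) P p"
proof (intro equalityI subsetI)
  fix z assume "z \<in> arc_of y P p"
  hence fr: "z \<in> frontier (Utop y P)" and on: "sqdist z p = 2" and above: "real_of_int y + 1 < snd z"
    by (auto simp: arc_of_def dist_eq_sqrt_sqdist sqdist_commute)
  have "2 \<le> sqdist z q" if "q \<in> P" for q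
  proof (rule ccontr)
    assume "\<not> 2 \<le> sqdist z q"
    hence "z \<in> ball q (sqrt 2) \<inter> {w. real_of_int y + 1 < snd w}"
      using above by (simp add: dist_eq_sqrt_sqdist sqdist_commute)
    moreover have "open (ball q (sqrt 2) \<inter> {w. real_of_int y + 1 < snd w})"
      by (intro open_Int open_ball open_Collect_less continuous_intros)
    moreover have "ball q (sqrt 2) \<inter> {w. real_of_int y + 1 < snd w} \<subseteq> Utop y P"
      using that by (force simp: Utop_def)
    ultimately have "z \<in> interior (Utop y P)" by (meson interiorI)
    thus False using fr by (simp add: frontier_def)
  qed
  with on above show "z \<in> upper_arc 2 (real_of_int y + 1) P p" by (simp add: upper_arc_def)
next
  fix z assume "z \<in> upper_arc 2 (real_of_int y + 1) P p"
  hence on: "sqdist z p = 2" and above: "real_of_int y + 1 < snd z" and out: "\<forall>q\<in>P. 2 \<le> sqdist z q"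
    by (auto simp: upper_arc_def)
  have "z \<in> Utop y P" using pP on above by (force simp: Utop_def dist_eq_sqrt_sqdist sqdist_commute)
  moreover have "z \<notin> interior (Utop y P)"
  proof
    assume "z \<in> interior (Utop y P)"
    then obtain e where "0 < e" "ball z e \<subseteq> Utop y P" by (auto simp: mem_interior)
    moreover have "(fst z, snd z + e/2) \<in> ball z e"
      using \<open>0 < e\<close> by (simp add: dist_eq_sqrt_sqdist sqdist_def)
    ultimately show False using raised_point_notin_Utop[OF below out above, of "e/2"] by auto
  qed
  ultimately have "z \<in> frontier (Utop y P)" using closure_subset by (auto simp: frontier_def)
  moreover have "z \<in> sphere p (sqrt 2)" using on by (simp add: dist_eq_sqrt_sqdist sqdist_commute)
  ultimately show "z \<in> arc_of y P p" using above by (simp add: arc_of_def)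
qed

theorem lemma11:
  fixes x y :: int and P :: "(real \<times> real) set"
  assumes "finite P" and "P \<subseteq> cell x y"
  shows "(\<forall>p\<in>P. connected (arc_of y P p)) \<and>
         (\<forall>p\<in>P. \<forall>q\<in>P. p \<noteq> q \<longrightarrow> contributes y P p \<longrightarrow> contributes y P q \<longrightarrow>
            ((\<forall>a\<in>arc_of y P p. \<forall>b\<in>arc_of y P q. fst a \<le> fst b) \<longleftrightarrow> fst p < fst q))"
proof -
  have below: "\<forall>q\<in>P. snd q < real_of_int y + 1"
    using assms(2) by (auto simp: cell_def)
  have arcs: "arc_of y P p = upper_arc 2 (real_of_int y + 1) P p" if "p \<in> P" for p
    using arc_of_eq_upper_arc[OF that below] .
  show ?thesis
  proof (intro conjI ballI impI)
    fix p assume "p \<in> P"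
    then show "connected (arc_of y P p)" using connected_upper_arc below by (simp add: arcs)
  next
    fix p q assume pq: "p \<in> P" "q \<in> P" "p \<noteq> q" and "contributes y P p" "contributes y P q"
    then obtain a1 a2 b where "a1 \<in> arc_of y P p" "a2 \<in> arc_of y P p" "a1 \<noteq> a2" "b \<in> arc_of y P q"
      by (auto simp: contributes_def)
    with pq show "(\<forall>a\<in>arc_of y P p. \<forall>b\<in>arc_of y P q. fst a \<le> fst b) \<longleftrightarrow> fst p < fst q"
      unfolding arcs[OF pq(1)] arcs[OF pq(2)] by (intro upper_arc_left_iff below)
  qed
qed

end
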